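(* Let $\mathfrak g$ be a Lie ring satisfying $\mathrm{ad}(u)\,\mathrm{ad}([u,w])=0$ for all $u,w\in\mathfrak g$. If $\mathfrak g$ is generated by finitely many elements of the form $[x,y]$ with $x,y\in\mathfrak g$, then $\mathfrak g$ is nilpotent.
   Context: For $u\in\mathfrak g$, $\mathrm{ad}(u):\mathfrak g\to\mathfrak g$ is $v\mapsto[v,u]$. Maps are composed left to right: $v\,\mathrm{ad}(u)\mathrm{ad}(w)=[[v,u],w]$. *)

theory Defs
  imports Main
begin

definition lie_ring :: "('a::ab_group_add \<Rightarrow> 'a \<Rightarrow> 'a) \<Rightarrow> bool" where
  "lie_ring br \<longleftrightarrow>
     (\<forall>x y z. br (x + y) z = br x z + br y z) \<and>
     (\<forall>x y z. br x (y + z) = br x y + br x z) \<and>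
     (\<forall>x. br x x = 0) \<and>
     (\<forall>x y z. br x (br y z) + br y (br z x) + br z (br x y) = 0)"

inductive_set add_span :: "'a::ab_group_add set \<Rightarrow> 'a set" for S where
  gen: "x \<in> S \<Longrightarrow> x \<in> add_span S"
| zero: "0 \<in> add_span S"
| add: "x \<in> add_span S \<Longrightarrow> y \<in> add_span S \<Longrightarrow> x + y \<in> add_span S"
| neg: "x \<in> add_span S \<Longrightarrow> - x \<in> add_span S"

inductive_set lie_span :: "('a::ab_group_add \<Rightarrow> 'a \<Rightarrow> 'a) \<Rightarrow> 'a set \<Rightarrow> 'a set" for br S where
  gen: "x \<in> S \<Longrightarrow> x \<in> lie_span br S"
| zero: "0 \<in> lie_span br S"
| add: "x \<in> lie_span br S \<Longrightarrow> y \<in> lie_span br S \<Longrightarrow> x + y \<in> lie_span br S"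
| neg: "x \<in> lie_span br S \<Longrightarrow> - x \<in> lie_span br S"
| br: "x \<in> lie_span br S \<Longrightarrow> y \<in> lie_span br S \<Longrightarrow> br x y \<in> lie_span br S"

fun lower_central :: "('a::ab_group_add \<Rightarrow> 'a \<Rightarrow> 'a) \<Rightarrow> nat \<Rightarrow> 'a set" where
  "lower_central br 0 = UNIV"
| "lower_central br (Suc n) = add_span {br x y | x y. x \<in> lower_central br n}"

definition lie_nilpotent :: "('a::ab_group_add \<Rightarrow> 'a \<Rightarrow> 'a) \<Rightarrow> bool" where
  "lie_nilpotent br \<longleftrightarrow> (\<exists>n. lower_central br n = {0})"

end

theory Submission
  imports Defs
begin

text \<open>Since g is generated by brackets, it is perfect: every element is a sum of brackets.
  Hence every additive map vanishing on brackets vanishes identically. Polarizing the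
  identity \<open>[[v,u],[u,w]] = 0\<close> gives \<open>2[[a,b],[c,d]] = 0\<close>, and pushing this through
  perfectness three times gives \<open>2g = 0\<close>. In characteristic 2 the bracket is symmetric,
  and a combination of polarized identities and Jacobi relations shows
  \<open>[[[a,b],[c,d]],[e,f]] = 0\<close>; perfectness then collapses g to \<open>0\<close>, which is in
  particular nilpotent.\<close>

lemma additive_vanishes_on_add_span:
  fixes f :: "'a::ab_group_add \<Rightarrow> 'b::ab_group_add"
  assumes additive: "\<And>x y. f (x + y) = f x + f y"
    and vanishes: "\<And>s. s \<in> S \<Longrightarrow> f s = 0"
    and "x \<in> add_span S"
  shows "f x = 0"
proof -
  have zero: "f 0 = 0"
    using additive[of 0 0] by simp
  from \<open>x \<in> add_span S\<close> show ?thesis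
  proof (induction rule: add_span.induct)
    case (neg x)
    have "f (- x) + f x = 0" using additive[of "- x" x] zero by simp
    then show ?case using neg.IH by simp
  qed (simp_all add: vanishes additive zero)
qed

lemma lie_span_subset_add_span_brackets:
  assumes "G \<subseteq> {br x y | x y. True}"
  shows "lie_span br G \<subseteq> add_span {br x y | x y. True}"
proof
  fix t assume "t \<in> lie_span br G"
  then show "t \<in> add_span {br x y | x y. True}"
    by induction (use assms in \<open>auto intro: add_span.intros\<close>)
qed

definition jacobiator :: "('a::ab_group_add \<Rightarrow> 'a \<Rightarrow> 'a) \<Rightarrow> 'a \<Rightarrow> 'a \<Rightarrow> 'a \<Rightarrow> 'a" where
  "jacobiator br u v w = br (br u v) w + br (br v w) u + br (br w u) v"

definition polarized_ad_identity ::
    "('a::ab_group_add \<Rightarrow> 'a \<Rightarrow> 'a) \<Rightarrow> 'a \<Rightarrow> 'a \<Rightarrow> 'a \<Rightarrow> 'a \<Rightarrow> 'a" where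
  "polarized_ad_identity br v u u' w = br (br v u) (br u' w) + br (br v u') (br u w)"

locale ad_identity_lie_ring =
  fixes br :: "'a::ab_group_add \<Rightarrow> 'a \<Rightarrow> 'a"
  assumes left_add: "br (x + y) z = br x z + br y z"
    and right_add: "br x (y + z) = br x y + br x z"
    and alternating: "br x x = 0"
    and jacobi: "br x (br y z) + br y (br z x) + br z (br x y) = 0"
    and ad_identity: "br (br v u) (br u w) = 0"
begin

lemma left_zero [simp]: "br 0 y = 0"
  using left_add[of 0 0 y] by simp

lemma right_zero [simp]: "br x 0 = 0"
  using right_add[of x 0 0] by simp

lemma left_minus [simp]: "br (- x) y = - br x y"
  using left_add[of "- x" x y] by (simp add: eq_neg_iff_add_eq_0)

lemma right_minus [simp]: "br x (- y) = - br x y"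
  using right_add[of x "- y" y] by (simp add: eq_neg_iff_add_eq_0)

lemma anticommute: "br y x = - br x y"
proof -
  have "br x y + br y x = 0"
    using alternating[of "x + y", unfolded left_add right_add] by (simp add: alternating add_ac)
  then show ?thesis by (simp add: eq_neg_iff_add_eq_0 add.commute)
qed

lemma polarized_ad_identity_zero: "polarized_ad_identity br v u u' w = 0"
proof -
  have "br (br v (u + u')) (br (u + u') w) = 0" by (rule ad_identity)
  then show ?thesis
    unfolding polarized_ad_identity_def by (simp add: left_add right_add ad_identity add_ac)
qed

lemma bracket_of_brackets_swap: "br (br v u) (br u' w) = - br (br v u') (br u w)"
  using polarized_ad_identity_zero[of v u u' w]
  by (simp add: polarized_ad_identity_def eq_neg_iff_add_eq_0)

lemma bracket_of_brackets_two_torsion: "br (br a b) (br c d) + br (br a b) (br c d) = 0"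
proof -
  have "br (br a b) (br c d) = - br (br a c) (br b d)"
    by (rule bracket_of_brackets_swap)
  also have "\<dots> = - br (br c a) (br d b)"
    by (simp add: anticommute[of c a] anticommute[of d b])
  also have "\<dots> = br (br c d) (br a b)"
    by (simp add: bracket_of_brackets_swap[of c a d b])
  also have "\<dots> = - br (br a b) (br c d)"
    by (rule anticommute)
  finally show ?thesis by (simp add: eq_neg_iff_add_eq_0)
qed

end

locale char2_ad_identity_lie_ring =
  ad_identity_lie_ring br for br :: "'a::ab_group_add \<Rightarrow> 'a \<Rightarrow> 'a" +
  assumes char2: "(x::'a) + x = 0"
begin

lemma minus_self [simp]: "- (x::'a) = x"
  by (rule minus_unique[OF char2])

lemma add_self_cancel: "(x::'a) + (x + y) = y"
  by (metis add.assoc add.left_neutral char2)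

lemma commute: "br x y = br y x"
  using anticommute[of x y] by simp

lemma jacobiator_zero: "jacobiator br u v w = 0"
  unfolding jacobiator_def using jacobi[of u v w] by (simp add: commute add_ac)

text \<open>The left-hand side is the following sum of vanishing polarized identities and
  Jacobiators; expanding both sides, everything cancels in pairs by symmetry of the bracket
  and \<open>x + x = 0\<close>.\<close>
lemma bracket_bracket_of_brackets_zero: "br (br (br a b) (br c d)) (br e f) = 0"
proof -
  let ?P = "polarized_ad_identity br" and ?J = "jacobiator br"
  have "br (br (br a b) (br c d)) (br e f) =
      ?P b (br a f) c (br d e) + ?P (br b (br c f)) d e a + ?P (br a f) (br b d) e c
    + ?J (br a d) (br b (br c f)) e + ?P (br b d) c e (br a f) + ?P e (br c f) d (br a b)
    + ?P d (br a e) b (br c f) + ?J (br a f) (br b d) (br c e) + br (?P a b f c) (br d e)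
    + ?P (br b d) (br a c) f e + ?J (br a b) (br e (br c f)) d + ?P e (br a d) b (br c f)
    + ?P d b (br e (br c f)) a + ?P d b (br c e) (br a f) + ?P (br a c) e f (br b d)
    + br (?P b a (br c f) d) e + ?J (br a e) (br b (br c f)) d + br (?P c a d b) (br e f)
    + br (?P b a d (br c f)) e + br (?P c d f a) (br b e) + ?P (br a f) (br c d) e b
    + br (?P b c e d) (br a f) + br (?P b d e c) (br a f) + br (?J a c f) (br e (br b d))
    + ?J (br a f) (br b c) (br d e) + ?P (br c d) b e (br a f) + br (?J a (br c f) e) (br b d)
    + ?J (br a (br c f)) (br b d) e + br (?P b a (br c f) e) d + br (?J c d e) (br b (br a f))"
    unfolding jacobiator_def polarized_ad_identity_def
    by (simp add: left_add right_add commute add_ac char2 add_self_cancel)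
  also have "\<dots> = 0" by (simp add: jacobiator_zero polarized_ad_identity_zero)
  finally show ?thesis .
qed

end

locale perfect_ad_identity_lie_ring = ad_identity_lie_ring +
  assumes perfect: "add_span {br x y | x y. True} = UNIV"
begin

lemma additive_vanishes_if_vanishes_on_brackets:
  fixes f :: "'a \<Rightarrow> 'b::ab_group_add"
  assumes "\<And>x y. f (x + y) = f x + f y" and "\<And>x y. f (br x y) = 0"
  shows "f t = 0"
  using additive_vanishes_on_add_span[of f "{br x y | x y. True}" t] assms perfect by auto

lemma two_torsion: "(t::'a) + t = 0"
proof -
  have bracket_left_bracket: "br (br a b) q + br (br a b) q = 0" for a b q
    by (rule additive_vanishes_if_vanishes_on_brackets[where f = "\<lambda>q. br (br a b) q + br (br a b) q"])
       (simp_all add: right_add add_ac bracket_of_brackets_two_torsion)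
  have bracket: "br p q + br p q = 0" for p q
    by (rule additive_vanishes_if_vanishes_on_brackets[where f = "\<lambda>p. br p q + br p q"])
       (simp_all add: left_add add_ac bracket_left_bracket)
  show ?thesis
    by (rule additive_vanishes_if_vanishes_on_brackets[where f = "\<lambda>t. t + t"])
       (simp_all add: add_ac bracket)
qed

sublocale char2_ad_identity_lie_ring
  by unfold_locales (rule two_torsion)

lemma all_zero: "(t::'a) = 0"
proof -
  have bracket_of_brackets: "br (br (br a b) (br c d)) z = 0" for a b c d z
    by (rule additive_vanishes_if_vanishes_on_brackets[where f = "\<lambda>z. br (br (br a b) (br c d)) z"])
       (simp_all add: right_add bracket_bracket_of_brackets_zero)
  have bracket_of_bracket: "br (br (br a b) w) z = 0" for a b w z
    by (rule additive_vanishes_if_vanishes_on_brackets[where f = "\<lambda>w. br (br (br a b) w) z"])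
       (simp_all add: right_add left_add bracket_of_brackets)
  have double_bracket: "br (br y w) z = 0" for y w z
    by (rule additive_vanishes_if_vanishes_on_brackets[where f = "\<lambda>y. br (br y w) z"])
       (simp_all add: left_add bracket_of_bracket)
  have bracket: "br x z = 0" for x z
    by (rule additive_vanishes_if_vanishes_on_brackets[where f = "\<lambda>x. br x z"])
       (simp_all add: left_add double_bracket)
  show ?thesis
    by (rule additive_vanishes_if_vanishes_on_brackets[where f = "\<lambda>x. x"]) (simp_all add: bracket)
qed

end

theorem lemma4p6:
  fixes br :: "'a::ab_group_add \<Rightarrow> 'a \<Rightarrow> 'a"
  assumes "lie_ring br"
    and "\<forall>u w v. br (br v u) (br u w) = 0"
    and "\<exists>G. finite G \<and> G \<subseteq> {br x y | x y. True} \<and> lie_span br G = UNIV"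
  shows "lie_nilpotent br"
proof -
  obtain G where "G \<subseteq> {br x y | x y. True}" and "lie_span br G = UNIV"
    using assms(3) by blast
  then have "add_span {br x y | x y. True} = UNIV"
    using lie_span_subset_add_span_brackets by blast
  with assms(1,2) interpret perfect_ad_identity_lie_ring br
    unfolding lie_ring_def by unfold_locales auto
  have "lower_central br 0 = {0}"
    using all_zero by auto
  then show ?thesis
    unfolding lie_nilpotent_def by blast
qed

end
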